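(* Let $N>3$. Consider quantum strategies given by: an integer $d\ge1$; the state $|\psi\rangle=\sum_{i=1}^N\sqrt{p_i}\,|i\rangle|\chi\rangle\in\mathbb{C}^N\otimes\mathbb{C}^d$ with $p_i\ge0$, $\sum_ip_i=1$ and $|\chi\rangle\in\mathbb{C}^d$ a unit vector; symmetric encoding unitaries $U_{\mathbf{x}}=\sum_{i=1}^N|i\rangle\langle i|\otimes U^{x_i}$ for a single unitary $U$ on $\mathbb{C}^d$ (i.e. $U_1=\cdots=U_N=U$); and a two-outcome POVM $\{\Pi_0,\Pi_1\}$, giving the behavior $P(a|\mathbf{x})=\langle\psi|U_{\mathbf{x}}^\dagger\Pi_aU_{\mathbf{x}}|\psi\rangle$. Then the maximum over all such strategies (all $d$, $p_i$, $\chi$, $U$, POVMs) of $$\frac{1}{N+1}P(0|0\cdots0)+\frac{1}{N+1}\sum_{k=1}^NP(1|e_k)-\frac{N}{N+1}$$ equals $$\delta_N=\frac{1}{(N+1)(N^2-3N+1)},$$ and this maximum is achieved with $d=2$ and the symmetric input state $p_i=1/N$ for all $i$.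
   Context: $\{|i\rangle\}$ is the standard basis of $\mathbb{C}^N$; $e_k\in\{0,1\}^N$ denotes the bit string with a single $1$ in position $k$ and zeros elsewhere. The quantity $\frac{1}{N+1}P(0|0\cdots0)+\frac{1}{N+1}\sum_kP(1|e_k)\le\frac{N}{N+1}$ is the fingerprinting inequality, which holds for all behaviors generated with $N-1$ classical particles; the displayed difference is its violation. *)

theory Defs
  imports "Jordan_Normal_Form.Matrix" Complex_Main
begin

definition adj :: "complex mat \<Rightarrow> complex mat" where
  "adj A = mat (dim_col A) (dim_row A) (\<lambda>(i,j). cnj (A $$ (j,i)))"

definition braket :: "complex vec \<Rightarrow> complex vec \<Rightarrow> complex" where
  "braket v w = (\<Sum>i<dim_vec v. cnj (v $ i) * w $ i)"

definition unitary_mat :: "nat \<Rightarrow> complex mat \<Rightarrow> bool" where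
  "unitary_mat n U \<longleftrightarrow> U \<in> carrier_mat n n \<and> adj U * U = 1\<^sub>m n \<and> U * adj U = 1\<^sub>m n"

definition psd_mat :: "nat \<Rightarrow> complex mat \<Rightarrow> bool" where
  "psd_mat n A \<longleftrightarrow> A \<in> carrier_mat n n \<and> adj A = A \<and>
     (\<forall>v \<in> carrier_vec n. Im (braket v (A *\<^sub>v v)) = 0 \<and> Re (braket v (A *\<^sub>v v)) \<ge> 0)"

text \<open>Space \<open>\<complex>^N \<otimes> \<complex>^d\<close>: basis vector \<open>|i\<rangle>|a\<rangle>\<close> has index \<open>i*d + a\<close>.
  The encoding unitary \<open>U_x = \<Sum>_i |i\<rangle>\<langle>i| \<otimes> U^(x_i)\<close>, bit strings as \<open>nat \<Rightarrow> bool\<close>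
  (True = 1), positions \<open>0..N-1\<close>.\<close>
definition enc_unitary :: "nat \<Rightarrow> nat \<Rightarrow> complex mat \<Rightarrow> (nat \<Rightarrow> bool) \<Rightarrow> complex mat" where
  "enc_unitary N d U x = mat (N*d) (N*d) (\<lambda>(r,c).
     if r div d = c div d then (U ^\<^sub>m (if x (r div d) then 1 else 0)) $$ (r mod d, c mod d) else 0)"

definition in_state :: "nat \<Rightarrow> nat \<Rightarrow> (nat \<Rightarrow> real) \<Rightarrow> complex vec \<Rightarrow> complex vec" where
  "in_state N d p \<chi> = vec (N*d) (\<lambda>r. complex_of_real (sqrt (p (r div d))) * \<chi> $ (r mod d))"

text \<open>\<open>P(a|x) = \<langle>\<psi>|U_x^\<dagger> \<Pi>_a U_x|\<psi>\<rangle>\<close> (real for hermitian \<open>\<Pi>_a\<close>).\<close>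
definition behavior :: "nat \<Rightarrow> nat \<Rightarrow> (nat \<Rightarrow> real) \<Rightarrow> complex vec \<Rightarrow> complex mat
    \<Rightarrow> complex mat \<Rightarrow> (nat \<Rightarrow> bool) \<Rightarrow> real" where
  "behavior N d p \<chi> U Pa x =
     Re (braket (in_state N d p \<chi>)
       ((adj (enc_unitary N d U x) * Pa * enc_unitary N d U x) *\<^sub>v in_state N d p \<chi>))"

definition valid_strategy :: "nat \<Rightarrow> nat \<Rightarrow> (nat \<Rightarrow> real) \<Rightarrow> complex vec \<Rightarrow> complex mat
    \<Rightarrow> complex mat \<Rightarrow> complex mat \<Rightarrow> bool" where
  "valid_strategy N d p \<chi> U Pi0 Pi1 \<longleftrightarrow>
     d \<ge> 1 \<and> (\<forall>i<N. p i \<ge> 0) \<and> (\<Sum>i<N. p i) = 1 \<and>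
     \<chi> \<in> carrier_vec d \<and> braket \<chi> \<chi> = 1 \<and> unitary_mat d U \<and>
     psd_mat (N*d) Pi0 \<and> psd_mat (N*d) Pi1 \<and> Pi0 + Pi1 = 1\<^sub>m (N*d)"

definition fp_violation :: "nat \<Rightarrow> nat \<Rightarrow> (nat \<Rightarrow> real) \<Rightarrow> complex vec \<Rightarrow> complex mat
    \<Rightarrow> complex mat \<Rightarrow> complex mat \<Rightarrow> real" where
  "fp_violation N d p \<chi> U Pi0 Pi1 =
     1 / (real N + 1) * behavior N d p \<chi> U Pi0 (\<lambda>_. False)
     + 1 / (real N + 1) * (\<Sum>k<N. behavior N d p \<chi> U Pi1 (\<lambda>i. i = k))
     - real N / (real N + 1)"

end

theory Submission
  imports Defs
begin

text \<open>Let \<open>\<psi>\<^sub>x\<close> be the encoded states and \<open>Q = \<Pi>\<^sub>0\<close>. Since \<open>\<Pi>\<^sub>1 = 1 - Q\<close> and the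
  \<open>\<psi>\<^sub>x\<close> are unit vectors, \<open>N + 1\<close> times the violation is
  \<open>\<langle>\<psi>\<^sub>0|Q|\<psi>\<^sub>0\<rangle> - \<Sum>\<^sub>k \<langle>\<psi>\<^sub>k|Q|\<psi>\<^sub>k\<rangle>\<close>. For \<open>a > 0\<close> with \<open>t = N a\<^sup>2 < 1\<close>,
  \<open>\<psi>\<^sub>0\<close> is the convex combination of \<open>r / (1 - t)\<close> (weight \<open>1 - t\<close>) and the
  \<open>\<psi>\<^sub>k / a\<close> (weight \<open>a\<^sup>2\<close> each), where \<open>r = \<psi>\<^sub>0 - a \<Sum>\<^sub>k \<psi>\<^sub>k\<close>. Convexity of the
  positive form \<open>Q\<close> and \<open>Q \<le> 1\<close> bound the violation by \<open>\<parallel>r\<parallel>\<^sup>2 / ((1 - t)(N + 1))\<close>.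
  Every block of \<open>r\<close> equals \<open>(1 - a (N - 1)) \<chi> - a U \<chi>\<close>, so \<open>\<parallel>r\<parallel>\<^sup>2\<close> only depends on
  \<open>c = Re \<langle>\<chi>|U|\<chi>\<rangle>\<close>, and a good choice of \<open>a\<close> gives the bound \<open>\<delta>\<^sub>N\<close> for every
  \<open>c \<in> [-1, 1]\<close>. It is attained in dimension 2 by a real reflection \<open>U\<close> with
  \<open>c = -\<delta>\<^sub>N (N - 1)\<close>, uniform weights and a rank-one \<open>\<Pi>\<^sub>0\<close>.\<close>

lemma sum_lessThan_mult:
  "(\<Sum>j<N*d. f j) = (\<Sum>i<N. \<Sum>b<d. f (i*d + b))" for N d :: nat
proof -
  have "(\<Sum>j<N*d. f j) = (\<Sum>i<N. sum f {i*d..<i*d+d})"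
    by (rule sum.nat_group[symmetric])
  also have "\<dots> = (\<Sum>i<N. \<Sum>b<d. f (i*d + b))"
    by (simp add: sum.shift_bounds_nat_ivl[of f 0 "i*d" d for i, simplified] atLeast0LessThan add.commute)
  finally show ?thesis .
qed

lemma mult_add_less_mult:
  fixes i N b d :: nat
  assumes "i < N" "b < d"
  shows "i*d + b < N*d"
proof -
  have "i*d + b < Suc i * d" using assms(2) by simp
  also have "\<dots> \<le> N*d" using assms(1) by (intro mult_le_mono1) simp
  finally show ?thesis .
qed

lemma sum_if_eq_else:
  fixes A B :: "'a :: comm_ring_1"
  assumes "i < N"
  shows "(\<Sum>k<N. if i = k then A else B) = A + (of_nat N - 1) * B"
    and "(\<Sum>k<N. if k = i then A else B) = A + (of_nat N - 1) * B"
proof -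
  have "(\<Sum>k<N. if i = k then A else B) = (\<Sum>k<N. B + (if i = k then A - B else 0))"
    by (intro sum.cong) auto
  also have "\<dots> = of_nat N * B + (A - B)" using assms by (simp add: sum.distrib)
  finally show "(\<Sum>k<N. if i = k then A else B) = A + (of_nat N - 1) * B"
    by (simp add: algebra_simps)
  then show "(\<Sum>k<N. if k = i then A else B) = A + (of_nat N - 1) * B"
    by (simp add: eq_commute)
qed

lemma adj_carrier_mat: "A \<in> carrier_mat n m \<Longrightarrow> adj A \<in> carrier_mat m n"
  by (simp add: adj_def)

lemma adj_adj [simp]: "adj (adj A) = A"
  by (auto simp: adj_def)

lemma braket_mult_mat_vec:
  assumes A: "A \<in> carrier_mat n n" and v: "v \<in> carrier_vec n" and w: "w \<in> carrier_vec n"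
  shows "braket v (A *\<^sub>v w) = braket (adj A *\<^sub>v v) w"
proof -
  have "braket v (A *\<^sub>v w) = (\<Sum>i<n. \<Sum>j<n. cnj (v$i) * A$$(i,j) * w$j)"
    using A v w by (simp add: braket_def scalar_prod_def atLeast0LessThan sum_distrib_left mult.assoc)
  also have "\<dots> = (\<Sum>j<n. \<Sum>i<n. cnj (v$i) * A$$(i,j) * w$j)"
    by (rule sum.swap)
  also have "\<dots> = braket (adj A *\<^sub>v v) w"
    using A v w by (simp add: braket_def adj_def scalar_prod_def atLeast0LessThan sum_distrib_left sum_distrib_right mult_ac)
  finally show ?thesis .
qed

lemma braket_conjugated_mat:
  assumes A: "A \<in> carrier_mat n n" and P: "P \<in> carrier_mat n n" and v: "v \<in> carrier_vec n"
  shows "braket v ((adj A * P * A) *\<^sub>v v) = braket (A *\<^sub>v v) (P *\<^sub>v (A *\<^sub>v v))"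
proof -
  have "(adj A * P * A) *\<^sub>v v = adj A *\<^sub>v (P *\<^sub>v (A *\<^sub>v v))"
    using A P v adj_carrier_mat[OF A] by (simp add: assoc_mult_mat_vec[of _ n n _ n])
  then show ?thesis
    using braket_mult_mat_vec[of "adj A" n v "P *\<^sub>v (A *\<^sub>v v)"] A P v adj_carrier_mat[OF A] by simp
qed

lemma braket_cnj: "dim_vec v = dim_vec w \<Longrightarrow> cnj (braket v w) = braket w v"
  by (simp add: braket_def cnj_sum mult.commute)

lemma braket_add_right:
  "dim_vec u = dim_vec v \<Longrightarrow> dim_vec w = dim_vec v \<Longrightarrow> braket v (u + w) = braket v u + braket v w"
  by (simp add: braket_def sum.distrib distrib_left)

lemma braket_diff_right:
  "dim_vec u = dim_vec v \<Longrightarrow> dim_vec w = dim_vec v \<Longrightarrow> braket v (u - w) = braket v u - braket v w"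
  by (simp add: braket_def sum_subtractf right_diff_distrib)

lemma cnj_mult_self: "cnj z * z = of_real ((cmod z)^2)"
  by (simp add: complex_norm_square[symmetric] mult.commute)

lemma braket_self: "braket v v = of_real (\<Sum>j<dim_vec v. (cmod (v$j))^2)"
  by (simp add: braket_def cnj_mult_self)

lemma Re_braket_self_nonneg: "0 \<le> Re (braket v v)"
  by (simp add: braket_self sum_nonneg)

lemma braket_unitary:
  assumes U: "unitary_mat d U" and v: "v \<in> carrier_vec d"
  shows "braket (U *\<^sub>v v) (U *\<^sub>v v) = braket v v"
proof -
  have Uc: "U \<in> carrier_mat d d" and UU: "adj U * U = 1\<^sub>m d"
    using U by (auto simp: unitary_mat_def)
  have "adj U *\<^sub>v (U *\<^sub>v v) = v"
    using Uc v UU by (metis adj_carrier_mat assoc_mult_mat_vec one_mult_mat_vec)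
  then show ?thesis
    using braket_mult_mat_vec[of "adj U" d v "U *\<^sub>v v"] Uc v by (simp add: adj_carrier_mat)
qed

lemma Re_braket_real_combination:
  assumes u: "u \<in> carrier_vec d" and v: "v \<in> carrier_vec d"
  shows "Re (braket (of_real \<mu> \<cdot>\<^sub>v u + of_real \<nu> \<cdot>\<^sub>v v) (of_real \<mu> \<cdot>\<^sub>v u + of_real \<nu> \<cdot>\<^sub>v v))
    = \<mu>^2 * Re (braket u u) + \<nu>^2 * Re (braket v v) + 2 * \<mu> * \<nu> * Re (braket u v)"
proof -
  have "Re (braket v u) = Re (braket u v)"
    using braket_cnj[of u v] u v by (metis carrier_vecD cnj.simps(1))
  moreover have "braket (of_real \<mu> \<cdot>\<^sub>v u + of_real \<nu> \<cdot>\<^sub>v v) (of_real \<mu> \<cdot>\<^sub>v u + of_real \<nu> \<cdot>\<^sub>v v)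
      = of_real (\<mu>^2) * braket u u + of_real (\<nu>^2) * braket v v + of_real (\<mu> * \<nu>) * (braket u v + braket v u)"
    using u v by (simp add: braket_def sum.distrib sum_distrib_left algebra_simps power2_eq_square)
  ultimately show ?thesis by simp
qed

lemma Re_braket_unit_bounds:
  assumes u: "u \<in> carrier_vec d" "braket u u = 1" and v: "v \<in> carrier_vec d" "braket v v = 1"
  shows "-1 \<le> Re (braket u v)" "Re (braket u v) \<le> 1"
  using Re_braket_self_nonneg[of "of_real 1 \<cdot>\<^sub>v u + of_real 1 \<cdot>\<^sub>v v"]
    Re_braket_self_nonneg[of "of_real 1 \<cdot>\<^sub>v u + of_real (-1) \<cdot>\<^sub>v v"]
  unfolding Re_braket_real_combination[OF u(1) v(1)] using u(2) v(2) by simp_all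

definition qform :: "complex mat \<Rightarrow> complex vec \<Rightarrow> real" where
  "qform Q v = Re (braket v (Q *\<^sub>v v))"

lemma qform_vec_double_sum:
  assumes "Q \<in> carrier_mat n n"
  shows "qform Q (vec n f) = Re (\<Sum>j<n. \<Sum>c<n. Q $$ (j,c) * (cnj (f j) * f c))"
  using assms by (simp add: qform_def braket_def scalar_prod_def atLeast0LessThan sum_distrib_left mult_ac)

lemma qform_scale:
  assumes "Q \<in> carrier_mat n n"
  shows "qform Q (vec n (\<lambda>j. of_real s * f j)) = s^2 * qform Q (vec n f)"
proof -
  have "(\<Sum>j<n. \<Sum>c<n. Q $$ (j,c) * (cnj (of_real s * f j) * (of_real s * f c)))
      = of_real (s^2) * (\<Sum>j<n. \<Sum>c<n. Q $$ (j,c) * (cnj (f j) * f c))"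
    by (simp add: sum_distrib_left power2_eq_square mult_ac)
  then show ?thesis using assms by (simp add: qform_vec_double_sum)
qed

text \<open>The Jensen defect is the weighted sum of the form at the deviations from the mean.\<close>
lemma qform_convex_combination:
  fixes w :: "'i \<Rightarrow> real" and x :: "'i \<Rightarrow> nat \<Rightarrow> complex"
  assumes Q: "Q \<in> carrier_mat n n" and Q_psd: "\<And>v. v \<in> carrier_vec n \<Longrightarrow> 0 \<le> qform Q v"
    and w: "\<And>i. i \<in> I \<Longrightarrow> 0 \<le> w i" "sum w I = 1"
  shows "qform Q (vec n (\<lambda>j. \<Sum>i\<in>I. of_real (w i) * x i j)) \<le> (\<Sum>i\<in>I. w i * qform Q (vec n (x i)))"
proof -
  define m where "m j = (\<Sum>i\<in>I. of_real (w i) * x i j)" for j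
  define pair where "pair K = (\<Sum>j<n. \<Sum>c<n. Q $$ (j,c) * K j c)" for K :: "nat \<Rightarrow> nat \<Rightarrow> complex"
  have qform_pair: "qform Q (vec n f) = Re (pair (\<lambda>j c. cnj (f j) * f c))" for f
    unfolding pair_def by (rule qform_vec_double_sum[OF Q])
  have pair_linear: "(\<Sum>i\<in>I. of_real (w i) * pair (K i)) = pair (\<lambda>j c. \<Sum>i\<in>I. of_real (w i) * K i j c)" for K
    unfolding pair_def by (simp add: sum_distrib_left sum.swap[of _ I] mult_ac)
  have cnj_m: "cnj (m j) = (\<Sum>i\<in>I. of_real (w i) * cnj (x i j))" for j
    unfolding m_def by (simp add: cnj_sum)
  have kernel: "(\<Sum>i\<in>I. of_real (w i) * (cnj (x i j - m j) * (x i c - m c)))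
      = (\<Sum>i\<in>I. of_real (w i) * (cnj (x i j) * x i c)) - cnj (m j) * m c" for j c
  proof -
    have "(\<Sum>i\<in>I. of_real (w i) * (cnj (x i j - m j) * (x i c - m c)))
      = (\<Sum>i\<in>I. of_real (w i) * (cnj (x i j) * x i c)) - cnj (m j) * (\<Sum>i\<in>I. of_real (w i) * x i c)
        - (\<Sum>i\<in>I. of_real (w i) * cnj (x i j)) * m c + of_real (sum w I) * (cnj (m j) * m c)"
      by (simp add: algebra_simps sum.distrib sum_subtractf sum_distrib_left sum_distrib_right)
    then show ?thesis by (simp add: w(2) flip: m_def cnj_m)
  qed
  have "(\<Sum>i\<in>I. of_real (w i) * pair (\<lambda>j c. cnj (x i j - m j) * (x i c - m c)))
      = pair (\<lambda>j c. (\<Sum>i\<in>I. of_real (w i) * (cnj (x i j) * x i c)) - cnj (m j) * m c)"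
    by (simp only: pair_linear kernel)
  also have "\<dots> = pair (\<lambda>j c. \<Sum>i\<in>I. of_real (w i) * (cnj (x i j) * x i c)) - pair (\<lambda>j c. cnj (m j) * m c)"
    by (simp add: pair_def right_diff_distrib sum_subtractf)
  also have "\<dots> = (\<Sum>i\<in>I. of_real (w i) * pair (\<lambda>j c. cnj (x i j) * x i c)) - pair (\<lambda>j c. cnj (m j) * m c)"
    by (simp only: pair_linear)
  finally have decomp: "(\<Sum>i\<in>I. of_real (w i) * pair (\<lambda>j c. cnj (x i j - m j) * (x i c - m c)))
      = (\<Sum>i\<in>I. of_real (w i) * pair (\<lambda>j c. cnj (x i j) * x i c)) - pair (\<lambda>j c. cnj (m j) * m c)" .
  have "(\<Sum>i\<in>I. w i * qform Q (vec n (x i)))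
      = qform Q (vec n m) + (\<Sum>i\<in>I. w i * qform Q (vec n (\<lambda>j. x i j - m j)))"
    unfolding qform_pair using arg_cong[where f = Re, OF decomp] by (simp add: Re_sum)
  moreover have "0 \<le> (\<Sum>i\<in>I. w i * qform Q (vec n (\<lambda>j. x i j - m j)))"
    using w Q_psd by (intro sum_nonneg mult_nonneg_nonneg) auto
  ultimately show ?thesis unfolding m_def by linarith
qed

lemma sum_atMost_split_last: "(\<Sum>i\<le>N. h i) = (\<Sum>i<N. h i) + h N" for N :: nat
  by (simp flip: lessThan_Suc_atMost)

text \<open>Write \<open>f = (1 - N a\<^sup>2) (r / (1 - N a\<^sup>2)) + \<Sum>\<^sub>k a\<^sup>2 (g\<^sub>k / a)\<close> with
  \<open>r = f - a \<Sum>\<^sub>k g\<^sub>k\<close>; the weights sum to one, so Jensen applies.\<close>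
lemma qform_diff_le_residual:
  fixes g :: "nat \<Rightarrow> nat \<Rightarrow> complex"
  assumes Q: "Q \<in> carrier_mat n n" and Q_psd: "\<And>v. v \<in> carrier_vec n \<Longrightarrow> 0 \<le> qform Q v"
    and a: "0 < a" "real N * a^2 < 1"
  shows "qform Q (vec n f) - (\<Sum>k<N. qform Q (vec n (g k)))
    \<le> qform Q (vec n (\<lambda>j. f j - of_real a * (\<Sum>k<N. g k j))) / (1 - real N * a^2)"
proof -
  define t where "t = real N * a^2"
  define r where "r j = f j - of_real a * (\<Sum>k<N. g k j)" for j
  define w where "w i = (if i = N then 1 - t else a^2)" for i
  define x where "x i = (if i = N then (\<lambda>j. of_real (1 / (1 - t)) * r j) else (\<lambda>j. of_real (1 / a) * g i j))" for i
  have t: "t < 1" using a(2) unfolding t_def .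
  then have t_ne: "(of_real t :: complex) \<noteq> 1" by (metis less_irrefl of_real_1 of_real_eq_iff)
  have "qform Q (vec n (\<lambda>j. \<Sum>i\<le>N. of_real (w i) * x i j)) \<le> (\<Sum>i\<le>N. w i * qform Q (vec n (x i)))"
    using t by (intro qform_convex_combination[OF Q Q_psd]) (auto simp: w_def sum_atMost_split_last t_def)
  moreover have "(\<lambda>j. \<Sum>i\<le>N. of_real (w i) * x i j) = f"
    using a(1) t_ne by (auto simp: sum_atMost_split_last w_def x_def r_def sum_distrib_left power2_eq_square)
  moreover have "(\<Sum>i\<le>N. w i * qform Q (vec n (x i))) = qform Q (vec n r) / (1 - t) + (\<Sum>k<N. qform Q (vec n (g k)))"
  proof -
    have "qform Q (vec n (x N)) = (1 / (1 - t))^2 * qform Q (vec n r)"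
      unfolding x_def if_P[OF refl] by (rule qform_scale[OF Q])
    moreover have "qform Q (vec n (x k)) = (1 / a)^2 * qform Q (vec n (g k))" if "k < N" for k
      unfolding x_def if_not_P[OF less_not_refl3[OF that]] by (rule qform_scale[OF Q])
    ultimately show ?thesis
      using a(1) t by (simp add: sum_atMost_split_last w_def power2_eq_square)
  qed
  ultimately show ?thesis unfolding r_def t_def by simp
qed

lemma sqrt_mult_lt_weight_denominator:
  fixes N c \<delta> :: real
  assumes N: "4 \<le> N" and c: "-1 \<le> c" "c \<le> 1" and \<delta>: "0 < \<delta>"
  shows "sqrt N * (N - 1 + c) < N^2 - 2*(1 - c)*(N - 1) + \<delta>*N"
proof -
  define s where "s = sqrt N"
  have s2: "s^2 = N" unfolding s_def using N by simp
  have s: "2 \<le> s" unfolding s_def using N real_sqrt_le_mono[of 4 N] by simp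
  have "N - s = s * (s - 1)" using s2 by (simp add: algebra_simps power2_eq_square)
  moreover have "0 \<le> s * (s - 1)" using s by simp
  ultimately have "s \<le> N" by linarith
  then have "0 \<le> (1 + c) * (2*(N - 1) - s)" using c N by simp
  moreover have "0 \<le> (N - 2) * ((s - 2) * (s + 1))" using N s by simp
  moreover have "N^2 - 2*(1 - c)*(N - 1) + \<delta>*N - s*(N - 1 + c)
      = (N - 2) * ((s - 2) * (s + 1)) + \<delta>*N + (1 + c) * (2*(N - 1) - s)"
    using s2 by (simp add: algebra_simps power2_eq_square)
  moreover have "0 < \<delta>*N" using \<delta> N by simp
  ultimately show ?thesis unfolding s_def[symmetric] by linarith
qed

text \<open>The weight \<open>a\<close> minimises \<open>D a\<^sup>2 - 2 (N - 1 + c) a\<close>; the bound is attained exactly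
  at \<open>c = -\<delta> (N - 1)\<close>.\<close>
lemma exists_residual_weight:
  fixes N c :: real
  assumes N: "4 \<le> N" and c: "-1 \<le> c" "c \<le> 1"
  shows "\<exists>a>0. N * a^2 < 1 \<and>
    (1 - a*(N - 1))^2 + a^2 - 2*(1 - a*(N - 1))*a*c \<le> (1 - N*a^2) / (N^2 - 3*N + 1)"
proof -
  define K where "K = N^2 - 3*N + 1"
  define \<delta> where "\<delta> = 1 / K"
  have "K = N*(N - 3) + 1" unfolding K_def by (simp add: algebra_simps power2_eq_square)
  moreover have "0 \<le> N*(N - 3)" using N by simp
  ultimately have K: "0 < K" by simp
  then have \<delta>: "0 < \<delta>" "\<delta> * K = 1" unfolding \<delta>_def by simp_all
  define D where "D = N^2 - 2*(1 - c)*(N - 1) + \<delta>*N"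
  define a where "a = (N - 1 + c) / D"
  have lt: "sqrt N * (N - 1 + c) < D"
    unfolding D_def by (rule sqrt_mult_lt_weight_denominator[OF N c \<delta>(1)])
  have w: "0 < N - 1 + c" using N c by simp
  then have "0 \<le> sqrt N * (N - 1 + c)" using N by (intro mult_nonneg_nonneg) auto
  then have D: "0 < D" using lt by simp
  have a: "0 < a" unfolding a_def using w D by simp
  have "N * (N - 1 + c)^2 = (sqrt N * (N - 1 + c))^2" using N by (simp add: power_mult_distrib)
  also have "\<dots> < D^2" using lt w N by (simp add: power_strict_mono)
  finally have small: "N * a^2 < 1" unfolding a_def using D by (simp add: field_simps power_divide)
  have "(1 - a*(N - 1))^2 + a^2 - 2*(1 - a*(N - 1))*a*c - \<delta> * (1 - N*a^2)
      = D*a^2 - 2*(N - 1 + c)*a + 1 - \<delta>"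
    unfolding D_def by (simp add: algebra_simps power2_eq_square)
  also have "\<dots> = - ((N - 1 + c)^2 - (1 - \<delta>)*D) / D"
    unfolding a_def using D by (simp add: field_simps power2_eq_square)
  also have "(N - 1 + c)^2 - (1 - \<delta>)*D = (c + \<delta>*(N - 1))^2 + (\<delta>*K - 1)*(1 - \<delta>)"
    unfolding D_def K_def by (simp add: algebra_simps power2_eq_square)
  also have "- ((c + \<delta>*(N - 1))^2 + (\<delta>*K - 1)*(1 - \<delta>)) / D \<le> 0"
    using \<delta>(2) D by simp
  finally have "(1 - a*(N - 1))^2 + a^2 - 2*(1 - a*(N - 1))*a*c \<le> \<delta> * (1 - N*a^2)" by simp
  then show ?thesis using a small unfolding \<delta>_def K_def by auto
qed

definition block_vec :: "nat \<Rightarrow> nat \<Rightarrow> (nat \<Rightarrow> real) \<Rightarrow> (nat \<Rightarrow> complex vec) \<Rightarrow> complex vec" where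
  "block_vec N d p u = vec (N*d) (\<lambda>j. of_real (sqrt (p (j div d))) * u (j div d) $ (j mod d))"

lemma dim_block_vec [simp]: "dim_vec (block_vec N d p u) = N*d"
  by (simp add: block_vec_def)

lemma block_vec_carrier [simp]: "block_vec N d p u \<in> carrier_vec (N*d)"
  unfolding block_vec_def by (rule vec_carrier)

lemma cnj_sqrt_mult_sqrt:
  assumes "0 \<le> p"
  shows "cnj (of_real (sqrt p) * y) * (of_real (sqrt p) * z) = of_real p * (cnj y * z)"
proof -
  have sq: "of_real (sqrt p) * of_real (sqrt p) = (of_real p :: complex)"
    using assms by (simp flip: of_real_mult)
  have "cnj (of_real (sqrt p) * y) * (of_real (sqrt p) * z) = of_real (sqrt p) * of_real (sqrt p) * (cnj y * z)"
    by (simp add: mult_ac)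
  then show ?thesis unfolding sq .
qed

lemma braket_block_vec:
  assumes p: "\<forall>i<N. 0 \<le> p i" and u: "\<And>i. i < N \<Longrightarrow> u i \<in> carrier_vec d"
  shows "braket (block_vec N d p u) (block_vec N d p v) = (\<Sum>i<N. of_real (p i) * braket (u i) (v i))"
proof -
  have "braket (block_vec N d p u) (block_vec N d p v) = (\<Sum>i<N. \<Sum>b<d.
      cnj (of_real (sqrt (p i)) * u i $ b) * (of_real (sqrt (p i)) * v i $ b))"
    by (simp add: braket_def block_vec_def sum_lessThan_mult mult_add_less_mult)
  also have "\<dots> = (\<Sum>i<N. of_real (p i) * braket (u i) (v i))"
  proof (intro sum.cong refl)
    fix i assume "i \<in> {..<N}"
    then have "0 \<le> p i" "dim_vec (u i) = d" using p u by auto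
    show "(\<Sum>b<d. cnj (of_real (sqrt (p i)) * u i $ b) * (of_real (sqrt (p i)) * v i $ b))
        = of_real (p i) * braket (u i) (v i)"
      unfolding cnj_sqrt_mult_sqrt[OF \<open>0 \<le> p i\<close>] using \<open>dim_vec (u i) = d\<close>
      by (simp add: braket_def sum_distrib_left)
  qed
  finally show ?thesis .
qed

lemma braket_block_vec_unit:
  assumes p: "\<forall>i<N. 0 \<le> p i" "(\<Sum>i<N. p i) = 1"
    and u: "\<And>i. i < N \<Longrightarrow> u i \<in> carrier_vec d" "\<And>i. i < N \<Longrightarrow> braket (u i) (u i) = 1"
  shows "braket (block_vec N d p u) (block_vec N d p u) = 1"
  using p u by (simp add: braket_block_vec flip: of_real_sum)

lemma enc_unitary_carrier [simp]: "enc_unitary N d U x \<in> carrier_mat (N*d) (N*d)"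
  unfolding enc_unitary_def by (rule mat_carrier)

lemma in_state_carrier [simp]: "in_state N d p \<chi> \<in> carrier_vec (N*d)"
  by (simp add: in_state_def)

lemma mult_mat_vec_nth:
  "A \<in> carrier_mat n m \<Longrightarrow> v \<in> carrier_vec m \<Longrightarrow> j < n \<Longrightarrow> (A *\<^sub>v v) $ j = (\<Sum>c<m. A $$ (j,c) * v $ c)"
  by (auto simp: scalar_prod_def atLeast0LessThan intro!: sum.cong)

lemma enc_unitary_mult_in_state:
  assumes U: "U \<in> carrier_mat d d" and \<chi>: "\<chi> \<in> carrier_vec d"
  shows "enc_unitary N d U x *\<^sub>v in_state N d p \<chi> = block_vec N d p (\<lambda>i. if x i then U *\<^sub>v \<chi> else \<chi>)"
proof (rule eq_vecI)
  fix j assume "j < dim_vec (block_vec N d p (\<lambda>i. if x i then U *\<^sub>v \<chi> else \<chi>))"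
  then have j: "j < N*d" by simp
  define i0 where "i0 = j div d"
  define b0 where "b0 = j mod d"
  define M where "M = U ^\<^sub>m (if x i0 then 1 else 0)"
  have "0 < d" using j by (cases d) auto
  then have b0: "b0 < d" unfolding b0_def by simp
  have i0: "i0 < N" using j unfolding i0_def by (simp add: less_mult_imp_div_less)
  have M_\<chi>: "M *\<^sub>v \<chi> = (if x i0 then U *\<^sub>v \<chi> else \<chi>)"
    using U \<chi> by (simp add: M_def pow_mat.simps(2)[of U 0, simplified])
  have "(enc_unitary N d U x *\<^sub>v in_state N d p \<chi>) $ j = (\<Sum>i<N. \<Sum>b<d.
      enc_unitary N d U x $$ (j, i*d + b) * in_state N d p \<chi> $ (i*d + b))"
    unfolding mult_mat_vec_nth[OF enc_unitary_carrier in_state_carrier j] by (rule sum_lessThan_mult)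
  also have "\<dots> = (\<Sum>i<N. if i0 = i then (\<Sum>b<d. M $$ (b0, b) * (of_real (sqrt (p i0)) * \<chi> $ b)) else 0)"
  proof (rule sum.cong[OF refl])
    fix i assume i: "i \<in> {..<N}"
    have "enc_unitary N d U x $$ (j, i*d + b) * in_state N d p \<chi> $ (i*d + b)
        = (if i0 = i then M $$ (b0, b) * (of_real (sqrt (p i0)) * \<chi> $ b) else 0)" if "b < d" for b
      using i j that by (simp add: enc_unitary_def in_state_def M_def i0_def b0_def mult_add_less_mult)
    then show "(\<Sum>b<d. enc_unitary N d U x $$ (j, i*d + b) * in_state N d p \<chi> $ (i*d + b))
        = (if i0 = i then (\<Sum>b<d. M $$ (b0, b) * (of_real (sqrt (p i0)) * \<chi> $ b)) else 0)"
      by simp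
  qed
  also have "\<dots> = of_real (sqrt (p i0)) * (M *\<^sub>v \<chi>) $ b0"
    using i0 b0 U \<chi> by (simp add: M_def scalar_prod_def atLeast0LessThan sum_distrib_left mult_ac)
  finally show "(enc_unitary N d U x *\<^sub>v in_state N d p \<chi>) $ j
      = block_vec N d p (\<lambda>i. if x i then U *\<^sub>v \<chi> else \<chi>) $ j"
    using j by (simp add: block_vec_def M_\<chi> i0_def b0_def)
qed (simp add: carrier_matD[OF enc_unitary_carrier])

lemma behavior_eq_qform:
  assumes "P \<in> carrier_mat (N*d) (N*d)" "U \<in> carrier_mat d d" "\<chi> \<in> carrier_vec d"
  shows "behavior N d p \<chi> U P x = qform P (block_vec N d p (\<lambda>i. if x i then U *\<^sub>v \<chi> else \<chi>))"
  unfolding behavior_def qform_def braket_conjugated_mat[OF enc_unitary_carrier assms(1) in_state_carrier]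
    enc_unitary_mult_in_state[OF assms(2,3)] ..

lemma qform_complement:
  assumes "P \<in> carrier_mat n n" "P' \<in> carrier_mat n n" "P + P' = 1\<^sub>m n" "v \<in> carrier_vec n"
  shows "qform P' v = Re (braket v v) - qform P v"
proof -
  have "P *\<^sub>v v + P' *\<^sub>v v = v"
    using assms by (metis add_mult_distrib_mat_vec one_mult_mat_vec)
  then have "braket v (P *\<^sub>v v) + braket v (P' *\<^sub>v v) = braket v v"
    using assms braket_add_right[of "P *\<^sub>v v" v "P' *\<^sub>v v"] by simp
  then show ?thesis unfolding qform_def by (metis add_diff_cancel_left' minus_complex.sel(1))
qed

lemma fp_violation_eq_qform:
  assumes V: "valid_strategy N d p \<chi> U Pi0 Pi1"
  defines "\<psi> \<equiv> \<lambda>x. block_vec N d p (\<lambda>i. if x i then U *\<^sub>v \<chi> else \<chi>)"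
  shows "fp_violation N d p \<chi> U Pi0 Pi1
    = (qform Pi0 (\<psi> (\<lambda>_. False)) - (\<Sum>k<N. qform Pi0 (\<psi> (\<lambda>i. i = k)))) / (real N + 1)"
proof -
  have P: "Pi0 \<in> carrier_mat (N*d) (N*d)" "Pi1 \<in> carrier_mat (N*d) (N*d)" "Pi0 + Pi1 = 1\<^sub>m (N*d)"
    and U: "unitary_mat d U" "U \<in> carrier_mat d d" and \<chi>: "\<chi> \<in> carrier_vec d" "braket \<chi> \<chi> = 1"
    and p: "\<forall>i<N. 0 \<le> p i" "(\<Sum>i<N. p i) = 1"
    using V by (auto simp: valid_strategy_def psd_mat_def unitary_mat_def)
  have "braket (\<psi> x) (\<psi> x) = 1" for x
    unfolding \<psi>_def using p U \<chi> by (intro braket_block_vec_unit) (auto simp: braket_unitary)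
  then have "behavior N d p \<chi> U Pi1 x = 1 - qform Pi0 (\<psi> x)" for x
    using qform_complement[OF P, of "\<psi> x"] behavior_eq_qform[OF P(2) U(2) \<chi>(1)] by (simp add: \<psi>_def)
  then show ?thesis
    unfolding fp_violation_def behavior_eq_qform[OF P(1) U(2) \<chi>(1)] \<psi>_def[symmetric]
    by (simp add: \<psi>_def sum_subtractf diff_divide_distrib add_divide_distrib)
qed

lemma vec_nth_block_vec [simp]: "vec (N*d) (($) (block_vec N d p u)) = block_vec N d p u"
  by (rule eq_vecI) auto

lemma braket_block_vec_const:
  assumes "\<forall>i<N. 0 \<le> p i" "(\<Sum>i<N. p i) = 1" "u \<in> carrier_vec d" "v \<in> carrier_vec d"
  shows "braket (block_vec N d p (\<lambda>_. u)) (block_vec N d p (\<lambda>_. v)) = braket u v"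
  using assms by (simp add: braket_block_vec flip: sum_distrib_right of_real_sum)

lemma block_vec_residual:
  assumes u: "u \<in> carrier_vec d" and v: "v \<in> carrier_vec d"
  shows "vec (N*d) (\<lambda>j. block_vec N d p (\<lambda>_. u) $ j
      - of_real a * (\<Sum>k<N. block_vec N d p (\<lambda>i. if i = k then v else u) $ j))
    = block_vec N d p (\<lambda>_. of_real (1 - a * (real N - 1)) \<cdot>\<^sub>v u + of_real (- a) \<cdot>\<^sub>v v)"
proof (rule eq_vecI)
  fix j assume "j < dim_vec (block_vec N d p (\<lambda>_. of_real (1 - a * (real N - 1)) \<cdot>\<^sub>v u + of_real (- a) \<cdot>\<^sub>v v))"
  then have j: "j < N*d" by simp
  then have "j div d < N" "j mod d < d"
    by (simp_all add: less_mult_imp_div_less) (cases d; simp)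
  then have sum_eq: "(\<Sum>k<N. block_vec N d p (\<lambda>i. if i = k then v else u) $ j)
      = of_real (sqrt (p (j div d))) * (v $ (j mod d) + (of_nat N - 1) * u $ (j mod d))"
    using j by (simp add: block_vec_def if_distrib[of "\<lambda>w. w $ (j mod d)"] sum_if_eq_else
        flip: sum_distrib_left)
  have "vec (N*d) (\<lambda>j. block_vec N d p (\<lambda>_. u) $ j
      - of_real a * (\<Sum>k<N. block_vec N d p (\<lambda>i. if i = k then v else u) $ j)) $ j
      = block_vec N d p (\<lambda>_. u) $ j - of_real a * (\<Sum>k<N. block_vec N d p (\<lambda>i. if i = k then v else u) $ j)"
    using j by simp
  also have "\<dots> = block_vec N d p (\<lambda>_. of_real (1 - a * (real N - 1)) \<cdot>\<^sub>v u + of_real (- a) \<cdot>\<^sub>v v) $ j"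
    unfolding sum_eq using j u v \<open>j mod d < d\<close> by (simp add: block_vec_def algebra_simps)
  finally show "vec (N*d) (\<lambda>j. block_vec N d p (\<lambda>_. u) $ j
      - of_real a * (\<Sum>k<N. block_vec N d p (\<lambda>i. if i = k then v else u) $ j)) $ j
    = block_vec N d p (\<lambda>_. of_real (1 - a * (real N - 1)) \<cdot>\<^sub>v u + of_real (- a) \<cdot>\<^sub>v v) $ j" .
qed simp

lemma fp_violation_le:
  assumes N: "3 < N" and V: "valid_strategy N d p \<chi> U Pi0 Pi1"
  shows "fp_violation N d p \<chi> U Pi0 Pi1 \<le> 1 / ((real N + 1) * (real N ^ 2 - 3 * real N + 1))"
proof -
  have P: "Pi0 \<in> carrier_mat (N*d) (N*d)" "Pi1 \<in> carrier_mat (N*d) (N*d)" "Pi0 + Pi1 = 1\<^sub>m (N*d)"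
    and P_psd: "\<And>v. v \<in> carrier_vec (N*d) \<Longrightarrow> 0 \<le> qform Pi0 v" "\<And>v. v \<in> carrier_vec (N*d) \<Longrightarrow> 0 \<le> qform Pi1 v"
    and U: "unitary_mat d U" "U \<in> carrier_mat d d" and \<chi>: "\<chi> \<in> carrier_vec d" "braket \<chi> \<chi> = 1"
    and p: "\<forall>i<N. 0 \<le> p i" "(\<Sum>i<N. p i) = 1"
    using V by (auto simp: valid_strategy_def psd_mat_def unitary_mat_def qform_def)
  define \<omega> where "\<omega> = U *\<^sub>v \<chi>"
  have \<omega>: "\<omega> \<in> carrier_vec d" "braket \<omega> \<omega> = 1"
    using U \<chi> by (auto simp: \<omega>_def braket_unitary)
  define c where "c = Re (braket \<chi> \<omega>)"
  define K where "K = real N ^ 2 - 3 * real N + 1"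
  obtain a where a: "0 < a" "real N * a^2 < 1"
    and a_bound: "(1 - a*(real N - 1))^2 + a^2 - 2*(1 - a*(real N - 1))*a*c \<le> (1 - real N * a^2) / K"
    using exists_residual_weight[of "real N" c] Re_braket_unit_bounds[OF \<chi> \<omega>] N
    unfolding c_def K_def by auto
  define \<psi> where "\<psi> x = block_vec N d p (\<lambda>i. if x i then \<omega> else \<chi>)" for x :: "nat \<Rightarrow> bool"
  define r where "r = of_real (1 - a * (real N - 1)) \<cdot>\<^sub>v \<chi> + of_real (- a) \<cdot>\<^sub>v \<omega>"
  have r: "r \<in> carrier_vec d" using \<chi> \<omega> by (simp add: r_def)
  have r_norm: "Re (braket r r) \<le> (1 - real N * a^2) / K"
    using a_bound unfolding r_def Re_braket_real_combination[OF \<chi>(1) \<omega>(1)] by (simp add: c_def \<chi> \<omega>)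
  have "qform Pi0 (\<psi> (\<lambda>_. False)) - (\<Sum>k<N. qform Pi0 (\<psi> (\<lambda>i. i = k)))
      \<le> qform Pi0 (block_vec N d p (\<lambda>_. r)) / (1 - real N * a^2)"
    using qform_diff_le_residual[OF P(1) P_psd(1) a, of "($) (\<psi> (\<lambda>_. False))" "\<lambda>k. ($) (\<psi> (\<lambda>i. i = k))"]
    by (simp add: \<psi>_def r_def block_vec_residual[OF \<chi>(1) \<omega>(1)])
  also have "\<dots> \<le> Re (braket r r) / (1 - real N * a^2)"
    using qform_complement[OF P, of "block_vec N d p (\<lambda>_. r)"] P_psd(2)[of "block_vec N d p (\<lambda>_. r)"] a(2)
    by (simp add: braket_block_vec_const[OF p r r] divide_right_mono)
  also have "\<dots> \<le> (1 - real N * a^2) / K / (1 - real N * a^2)"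
    using r_norm a(2) by (intro divide_right_mono) auto
  also have "\<dots> = 1 / K" using a(2) by simp
  finally have "qform Pi0 (\<psi> (\<lambda>_. False)) - (\<Sum>k<N. qform Pi0 (\<psi> (\<lambda>i. i = k))) \<le> 1 / K" .
  from divide_right_mono[OF this, of "real N + 1"] show ?thesis
    unfolding fp_violation_eq_qform[OF V] K_def \<psi>_def \<omega>_def by (simp add: mult.commute)
qed

definition rank_one_proj :: "nat \<Rightarrow> complex vec \<Rightarrow> complex mat" where
  "rank_one_proj n f = mat n n (\<lambda>(j,c). f $ j * cnj (f $ c))"

lemma rank_one_proj_carrier [simp]: "rank_one_proj n f \<in> carrier_mat n n"
  unfolding rank_one_proj_def by (rule mat_carrier)

lemma braket_rank_one_proj:
  assumes f: "f \<in> carrier_vec n" and v: "v \<in> carrier_vec n"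
  shows "braket v (rank_one_proj n f *\<^sub>v v) = of_real ((cmod (braket f v))^2)"
proof -
  have "braket v (rank_one_proj n f *\<^sub>v v) = (\<Sum>j<n. cnj (v$j) * (\<Sum>c<n. f$j * cnj (f$c) * v$c))"
    using f v by (simp add: braket_def rank_one_proj_def scalar_prod_def atLeast0LessThan)
  also have "\<dots> = (\<Sum>j<n. cnj (v$j) * f$j) * (\<Sum>c<n. cnj (f$c) * v$c)"
    by (subst sum_product) (simp add: sum_distrib_left mult_ac)
  also have "\<dots> = cnj (braket f v) * braket f v"
    using f v braket_cnj[of f v] by (simp add: braket_def)
  finally show ?thesis unfolding cnj_mult_self .
qed

lemma qform_rank_one_proj:
  "f \<in> carrier_vec n \<Longrightarrow> v \<in> carrier_vec n \<Longrightarrow> qform (rank_one_proj n f) v = (cmod (braket f v))^2"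
  by (simp add: qform_def braket_rank_one_proj)

lemma cauchy_schwarz_unit:
  assumes f: "f \<in> carrier_vec n" "braket f f = 1" and v: "v \<in> carrier_vec n"
  shows "(cmod (braket f v))^2 \<le> Re (braket v v)"
proof -
  define L where "L = braket f v"
  have "braket (v - L \<cdot>\<^sub>v f) (v - L \<cdot>\<^sub>v f)
      = braket v v - L * braket v f - cnj L * braket f v + cnj L * L * braket f f"
    using f(1) v by (simp add: braket_def algebra_simps sum.distrib sum_subtractf sum_distrib_left)
  also have "\<dots> = braket v v - cnj L * L"
    using f v braket_cnj[of f v] by (simp add: L_def algebra_simps)
  also have "\<dots> = braket v v - of_real ((cmod L)^2)"
    by (simp only: cnj_mult_self)
  finally show ?thesis
    using Re_braket_self_nonneg[of "v - L \<cdot>\<^sub>v f"] unfolding L_def by simp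
qed

lemma psd_rank_one_proj:
  assumes "f \<in> carrier_vec n"
  shows "psd_mat n (rank_one_proj n f)"
  unfolding psd_mat_def
proof (intro conjI ballI)
  fix v :: "complex vec" assume "v \<in> carrier_vec n"
  then show "Im (braket v (rank_one_proj n f *\<^sub>v v)) = 0" "0 \<le> Re (braket v (rank_one_proj n f *\<^sub>v v))"
    using assms by (simp_all add: braket_rank_one_proj)
qed (auto simp: adj_def rank_one_proj_def)

lemma psd_one_minus_rank_one_proj:
  assumes f: "f \<in> carrier_vec n" "braket f f = 1"
  shows "psd_mat n (1\<^sub>m n - rank_one_proj n f)"
  unfolding psd_mat_def
proof (intro conjI ballI)
  fix v :: "complex vec" assume v: "v \<in> carrier_vec n"
  have "(1\<^sub>m n - rank_one_proj n f) *\<^sub>v v = v - rank_one_proj n f *\<^sub>v v"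
    using minus_mult_distrib_mat_vec[OF one_carrier_mat rank_one_proj_carrier v] v by simp
  moreover have "dim_vec (rank_one_proj n f *\<^sub>v v) = dim_vec v"
    using v by (simp add: rank_one_proj_def)
  ultimately have "braket v ((1\<^sub>m n - rank_one_proj n f) *\<^sub>v v) = braket v v - of_real ((cmod (braket f v))^2)"
    using f v by (simp add: braket_diff_right braket_rank_one_proj)
  then show "Im (braket v ((1\<^sub>m n - rank_one_proj n f) *\<^sub>v v)) = 0"
    "0 \<le> Re (braket v ((1\<^sub>m n - rank_one_proj n f) *\<^sub>v v))"
    using cauchy_schwarz_unit[OF f v] by (simp_all add: braket_self)
qed (auto simp: adj_def rank_one_proj_def)

definition reflection :: "real \<Rightarrow> real \<Rightarrow> complex mat" where
  "reflection c s = mat 2 2 (\<lambda>(i,j). of_real (if i = j then (if i = 0 then c else - c) else s))"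

lemma less_2_cases: "(i::nat) < 2 \<longleftrightarrow> i = 0 \<or> i = 1"
  by auto

lemma sum_lessThan_2: "(\<Sum>i<2. f i) = f 0 + f (1::nat)"
  by (simp add: numeral_2_eq_2)

lemma unitary_reflection:
  assumes "c^2 + s^2 = 1"
  shows "unitary_mat 2 (reflection c s)"
proof -
  have adj: "adj (reflection c s) = reflection c s"
    by (rule eq_matI) (auto simp: adj_def reflection_def less_2_cases)
  have "reflection c s * reflection c s = 1\<^sub>m 2"
  proof (rule eq_matI)
    fix i j assume "i < dim_row (1\<^sub>m 2 :: complex mat)" "j < dim_col (1\<^sub>m 2 :: complex mat)"
    then have "i < 2" "j < 2" by simp_all
    moreover have "of_real c * of_real c + of_real s * of_real s = (1 :: complex)"
      using assms by (metis of_real_1 of_real_add of_real_mult power2_eq_square)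
    ultimately show "(reflection c s * reflection c s) $$ (i, j) = 1\<^sub>m 2 $$ (i, j)"
      by (auto simp: reflection_def scalar_prod_def atLeast0LessThan sum_lessThan_2 less_2_cases algebra_simps)
  qed (simp_all add: reflection_def)
  then show ?thesis unfolding unitary_mat_def adj by (simp add: reflection_def)
qed

lemma reflection_mult_unit_vec:
  "reflection c s *\<^sub>v unit_vec 2 0 = vec 2 (\<lambda>i. of_real (if i = 0 then c else s))"
  by (rule eq_vecI) (auto simp: reflection_def unit_vec_def scalar_prod_def atLeast0LessThan sum_lessThan_2 less_2_cases)

lemma braket_real_vec2:
  "braket (vec 2 (\<lambda>i. of_real (x i))) (vec 2 (\<lambda>i. of_real (y i))) = of_real (x 0 * y 0 + x 1 * y 1)"
  by (simp add: braket_def sum_lessThan_2)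

lemma optimal_direction_identity:
  fixes N \<delta> c s w g0 g1 :: real
  assumes \<delta>: "\<delta> * (N^2 - 3*N + 1) = 1" and c: "c = - \<delta> * (N - 1)" and s: "s^2 = 1 - c^2"
    and w: "w = N - 1 + c" and g0: "g0 = s * w" and g1: "g1 = N * (1 - \<delta>) - w^2"
  shows "N * g0^2 - (w * g0 + s * g1)^2 = N * \<delta> * (g0^2 + g1^2)"
proof -
  have "w * g0 + s * g1 = s * (N * (1 - \<delta>))"
    unfolding g0 g1 by (simp add: algebra_simps power2_eq_square)
  then have "(w * g0 + s * g1)^2 = s^2 * (N * (1 - \<delta>))^2"
    by (simp add: power_mult_distrib)
  then have "N * g0^2 - (w * g0 + s * g1)^2 - N * \<delta> * (g0^2 + g1^2)
      = N * (s^2 * (w^2 - N * (1 - \<delta>)^2) - \<delta> * (s^2 * w^2 + g1^2))"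
    unfolding g0 by (simp add: algebra_simps power2_eq_square)
  also have "s^2 * (w^2 - N * (1 - \<delta>)^2) - \<delta> * (s^2 * w^2 + g1^2)
      = (\<delta> * (N^2 - 3*N + 1) - 1) * ((-1 + 3*N - N^2) + \<delta>*(3 - 8*N + 3*N^2)
          + \<delta>^2*(-3 + 7*N - 3*N^2) + \<delta>^3*(1 - 2*N + N^2))"
    unfolding s g1 w c by (simp add: algebra_simps power2_eq_square power3_eq_cube)
  finally show ?thesis using \<delta> by simp
qed

text \<open>The cosine \<open>c = -\<delta> (N - 1)\<close> is where the residual bound is tight, and \<open>(g\<^sub>0, g\<^sub>1)\<close>
  is the qubit factor of the top eigenvector of \<open>|\<psi>\<^sub>0\<rangle>\<langle>\<psi>\<^sub>0| - \<Sum>\<^sub>k |\<psi>\<^sub>k\<rangle>\<langle>\<psi>\<^sub>k|\<close>.\<close>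
lemma optimal_parameters:
  fixes N :: real
  assumes N: "4 \<le> N"
  obtains c s g0 g1 where "c^2 + s^2 = 1" "0 < g0^2 + g1^2"
    "N * g0^2 - ((N - 1 + c) * g0 + s * g1)^2 = N * (g0^2 + g1^2) / (N^2 - 3*N + 1)"
proof -
  define K where "K = N^2 - 3*N + 1"
  define \<delta> where "\<delta> = 1 / K"
  define c where "c = - \<delta> * (N - 1)"
  define s where "s = sqrt (1 - c^2)"
  define w where "w = N - 1 + c"
  define g0 where "g0 = s * w"
  define g1 where "g1 = N * (1 - \<delta>) - w^2"
  have "K = N*(N - 3) + 1" "K - (N - 1) = N*(N - 4) + 2"
    unfolding K_def by (simp_all add: algebra_simps power2_eq_square)
  moreover have "0 \<le> N*(N - 3)" "0 \<le> N*(N - 4)" using N by simp_all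
  ultimately have K: "0 < K" "N - 1 < K" by linarith+
  then have "0 < \<delta> * (N - 1)" "\<delta> * (N - 1) < 1" "\<delta> * K = 1"
    using N by (simp_all add: \<delta>_def)
  then have c: "-1 < c" "c < 0" unfolding c_def by simp_all
  then have "c^2 < 1" by (simp add: abs_square_less_1)
  then have s: "s^2 = 1 - c^2" "0 < s" unfolding s_def by simp_all
  have "0 < g0" unfolding g0_def w_def using s c N by simp
  then have G: "0 < g0^2 + g1^2" by (simp add: add_pos_nonneg)
  have "N * g0^2 - (w * g0 + s * g1)^2 = N * \<delta> * (g0^2 + g1^2)"
    using \<open>\<delta> * K = 1\<close> s(1) unfolding K_def
    by (intro optimal_direction_identity) (simp_all add: c_def w_def g0_def g1_def)
  then have "N * g0^2 - (w * g0 + s * g1)^2 = N * (g0^2 + g1^2) / K"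
    by (simp add: \<delta>_def)
  moreover have "c^2 + s^2 = 1" using s by simp
  ultimately show ?thesis using that G unfolding w_def K_def by blast
qed

lemma braket_block_vec_uniform:
  assumes "h \<in> carrier_vec d" "\<And>i. i < N \<Longrightarrow> u i \<in> carrier_vec d"
  shows "braket (block_vec N d (\<lambda>_. 1 / real N) (\<lambda>_. h)) (block_vec N d (\<lambda>_. 1 / real N) u)
    = (\<Sum>i<N. braket h (u i)) / of_nat N"
  using assms by (simp add: braket_block_vec sum_divide_distrib)

lemma rank_one_proj_add_complement: "rank_one_proj n f + (1\<^sub>m n - rank_one_proj n f) = 1\<^sub>m n"
  by (rule eq_matI) (auto simp: rank_one_proj_def)

definition qubit_meas :: "nat \<Rightarrow> real \<Rightarrow> real \<Rightarrow> complex mat" where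
  "qubit_meas N h0 h1 = rank_one_proj (N*2)
     (block_vec N 2 (\<lambda>_. 1 / real N) (\<lambda>_. vec 2 (\<lambda>i. of_real (if i = 0 then h0 else h1))))"

lemma unit_vec_2_0: "(unit_vec 2 0 :: complex vec) = vec 2 (\<lambda>i. of_real (if i = 0 then 1 else 0))"
  by (rule eq_vecI) auto

lemma valid_qubit_strategy:
  assumes N: "0 < N" and cs: "c^2 + s^2 = 1" and h: "h0^2 + h1^2 = 1"
  shows "valid_strategy N 2 (\<lambda>_. 1 / real N) (unit_vec 2 0) (reflection c s)
    (qubit_meas N h0 h1) (1\<^sub>m (N*2) - qubit_meas N h0 h1)"
proof -
  define h :: "complex vec" where "h = vec 2 (\<lambda>i. of_real (if i = 0 then h0 else h1))"
  have p: "\<forall>i<N. 0 \<le> 1 / real N" "(\<Sum>i<N. 1 / real N) = 1" using N by simp_all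
  have "braket h h = 1" using h unfolding h_def braket_real_vec2 by (simp add: power2_eq_square)
  then have "braket (block_vec N 2 (\<lambda>_. 1 / real N) (\<lambda>_. h)) (block_vec N 2 (\<lambda>_. 1 / real N) (\<lambda>_. h)) = 1"
    using p by (intro braket_block_vec_unit) (auto simp: h_def)
  moreover have "braket (unit_vec 2 0) (unit_vec 2 0 :: complex vec) = 1"
    by (simp add: unit_vec_2_0 braket_real_vec2)
  ultimately show ?thesis
    unfolding valid_strategy_def qubit_meas_def h_def[symmetric] using p cs
    by (simp add: unitary_reflection psd_rank_one_proj psd_one_minus_rank_one_proj
        rank_one_proj_add_complement)
qed

lemma qform_qubit_meas:
  "qform (qubit_meas N h0 h1)
     (block_vec N 2 (\<lambda>_. 1 / real N) (\<lambda>i. if x i then reflection c s *\<^sub>v unit_vec 2 0 else unit_vec 2 0))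
   = ((\<Sum>i<N. if x i then c * h0 + s * h1 else h0) / real N)^2"
proof -
  define h :: "complex vec" where "h = vec 2 (\<lambda>i. of_real (if i = 0 then h0 else h1))"
  have "braket h (reflection c s *\<^sub>v unit_vec 2 0) = of_real (c * h0 + s * h1)"
    unfolding reflection_mult_unit_vec unfolding h_def braket_real_vec2 by (simp add: mult.commute)
  moreover have "braket h (unit_vec 2 0) = of_real h0"
    unfolding h_def unit_vec_2_0 braket_real_vec2 by simp
  ultimately have overlap: "braket h (if b then reflection c s *\<^sub>v unit_vec 2 0 else unit_vec 2 0)
      = of_real (if b then c * h0 + s * h1 else h0)" for b
    by simp
  have "reflection c s *\<^sub>v unit_vec 2 0 \<in> carrier_vec 2" "h \<in> carrier_vec 2"
    by (simp_all add: reflection_mult_unit_vec h_def)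
  then have "braket (block_vec N 2 (\<lambda>_. 1 / real N) (\<lambda>_. h))
      (block_vec N 2 (\<lambda>_. 1 / real N) (\<lambda>i. if x i then reflection c s *\<^sub>v unit_vec 2 0 else unit_vec 2 0))
      = (\<Sum>i<N. braket h (if x i then reflection c s *\<^sub>v unit_vec 2 0 else unit_vec 2 0)) / of_nat N"
    by (intro braket_block_vec_uniform) auto
  also have "\<dots> = of_real ((\<Sum>i<N. if x i then c * h0 + s * h1 else h0) / real N)"
    unfolding overlap by simp
  finally show ?thesis
    unfolding qubit_meas_def h_def[symmetric] qform_rank_one_proj[OF block_vec_carrier block_vec_carrier]
    by (simp only: norm_of_real power2_abs)
qed

lemma fp_violation_qubit_strategy:
  assumes N: "0 < N" and cs: "c^2 + s^2 = 1" and h: "h0^2 + h1^2 = 1"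
  shows "fp_violation N 2 (\<lambda>_. 1 / real N) (unit_vec 2 0) (reflection c s)
      (qubit_meas N h0 h1) (1\<^sub>m (N*2) - qubit_meas N h0 h1)
    = (h0^2 - ((real N - 1 + c) * h0 + s * h1)^2 / real N) / (real N + 1)"
proof -
  have "(\<Sum>i<N. if i = k then c * h0 + s * h1 else h0) = (real N - 1 + c) * h0 + s * h1" if "k < N" for k
    using sum_if_eq_else(2)[OF that, of "c * h0 + s * h1" h0] by (simp add: algebra_simps)
  then have "(\<Sum>k<N. qform (qubit_meas N h0 h1) (block_vec N 2 (\<lambda>_. 1 / real N)
        (\<lambda>i. if i = k then reflection c s *\<^sub>v unit_vec 2 0 else unit_vec 2 0)))
      = ((real N - 1 + c) * h0 + s * h1)^2 / real N"
    using N by (simp add: qform_qubit_meas power_divide power2_eq_square)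
  moreover have "qform (qubit_meas N h0 h1) (block_vec N 2 (\<lambda>_. 1 / real N) (\<lambda>_. unit_vec 2 0)) = h0^2"
    using qform_qubit_meas[of N h0 h1 "\<lambda>_. False"] N by simp
  ultimately show ?thesis
    unfolding fp_violation_eq_qform[OF valid_qubit_strategy[OF N cs h]] by simp
qed

lemma fp_violation_attained:
  assumes N: "3 < N"
  shows "\<exists>\<chi> U Pi0 Pi1. valid_strategy N 2 (\<lambda>_. 1 / real N) \<chi> U Pi0 Pi1 \<and>
    fp_violation N 2 (\<lambda>_. 1 / real N) \<chi> U Pi0 Pi1 = 1 / ((real N + 1) * (real N ^ 2 - 3 * real N + 1))"
proof -
  define K where "K = real N ^ 2 - 3 * real N + 1"
  have N4: "4 \<le> real N" using N by simp
  obtain c s g0 g1 where cs: "c^2 + s^2 = 1" and G: "0 < g0^2 + g1^2"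
    and opt: "real N * g0^2 - ((real N - 1 + c) * g0 + s * g1)^2 = real N * (g0^2 + g1^2) / K"
    using optimal_parameters[OF N4] unfolding K_def by blast
  define h0 where "h0 = g0 / sqrt (g0^2 + g1^2)"
  define h1 where "h1 = g1 / sqrt (g0^2 + g1^2)"
  have G_ne: "\<not> (g0 = 0 \<and> g1 = 0)" using G by auto
  have h: "h0^2 + h1^2 = 1"
    using G G_ne by (simp add: h0_def h1_def power_divide flip: add_divide_distrib)
  have "h0^2 - ((real N - 1 + c) * h0 + s * h1)^2 / real N
      = (real N * g0^2 - ((real N - 1 + c) * g0 + s * g1)^2) / (real N * (g0^2 + g1^2))"
  proof -
    have "(g0 / sqrt Gs)^2 - ((real N - 1 + c) * (g0 / sqrt Gs) + s * (g1 / sqrt Gs))^2 / real N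
        = (real N * g0^2 - ((real N - 1 + c) * g0 + s * g1)^2) / (real N * Gs)" if "0 < Gs" for Gs
      using that N by (simp add: power_divide field_simps power2_eq_square)
    then show ?thesis using G unfolding h0_def h1_def .
  qed
  also have "\<dots> = 1 / K" unfolding opt using G_ne N by simp
  finally have "fp_violation N 2 (\<lambda>_. 1 / real N) (unit_vec 2 0) (reflection c s)
      (qubit_meas N h0 h1) (1\<^sub>m (N*2) - qubit_meas N h0 h1) = 1 / ((real N + 1) * K)"
    using N cs h by (simp add: fp_violation_qubit_strategy mult.commute)
  then show ?thesis
    using valid_qubit_strategy[of N c s h0 h1] N cs h unfolding K_def by auto
qed

theorem theorem1:
  fixes N :: nat
  assumes "N > 3"
  shows "(\<forall>d p \<chi> U Pi0 Pi1. valid_strategy N d p \<chi> U Pi0 Pi1 \<longrightarrow>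
            fp_violation N d p \<chi> U Pi0 Pi1 \<le> 1 / ((real N + 1) * (real N ^ 2 - 3 * real N + 1)))
       \<and> (\<exists>\<chi> U Pi0 Pi1. valid_strategy N 2 (\<lambda>_. 1 / real N) \<chi> U Pi0 Pi1 \<and>
            fp_violation N 2 (\<lambda>_. 1 / real N) \<chi> U Pi0 Pi1 = 1 / ((real N + 1) * (real N ^ 2 - 3 * real N + 1)))"
  using fp_violation_le[OF assms] fp_violation_attained[OF assms] by blast

end
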